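(* Let $\mathbf{v}$ be quasi-definite with SMOP $(P_n)$, recurrence coefficients $(b_n),(a_n)$ and monic Jacobi matrix $J$; let $c,\widehat{\mathbf{v}}_0\in\mathbb{C}$ with $D_n:=\mathbf{v}_0P^{(1)}_{n-1}(c)+\widehat{\mathbf{v}}_0P_n(c)\ne0$ for all $n\ge0$, and $\widehat{\mathbf{v}}=(x-c)^{-1}\mathbf{v}+\widehat{\mathbf{v}}_0\boldsymbol\delta_c$ with SMOP $(\widehat P_n)$ and associated polynomials of the first kind $(\widehat P^{(1)}_n)$, whose monic Jacobi matrix is $\widehat J^{(1)}$. Let $\ell_n=-D_n/D_{n-1}$ ($n\ge1$) and $\beta_n=-\widehat P_{n+1}(c)/\widehat P_n(c)$ ($n\ge0$), so that $J-cI=UL$ with $U$ upper bidiagonal (diagonal $\beta_0,\beta_1,\dots$, superdiagonal $1$) and $L$ lower bidiagonal (diagonal $1$, subdiagonal $\ell_1,\ell_2,\dots$). Let $S_n=P_n+\frac{\mathbf{v}_0}{\widehat{\mathbf{v}}_0}P^{(1)}_{n-1}$ (the co-recursive polynomials of parameter $-\mathbf{v}_0/\widehat{\mathbf{v}}_0$ of $\mathbf{v}$), let $\mathbf{v}^\alpha$ be a quasi-definite functional whose SMOP is $(S_n)$, and let $J_\alpha$ be the monic Jacobi matrix of $(S_n)$. Then: (1) $(\widehat P^{(1)}_n)$ is the SMOP of $(x-c)\mathbf{v}^\alpha$, i.e. up to a nonzero factor $\widehat{\mathbf{v}}^{(1)}=(x-c)\mathbf{v}^\alpha$; (2) $J_\alpha-cI=\widehat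 L\widehat U$ and $\widehat J^{(1)}-cI=\widehat U\widehat L$, where $\widehat L$ is lower bidiagonal with diagonal $1$ and subdiagonal $\beta_1,\beta_2,\dots$, and $\widehat U$ is upper bidiagonal with diagonal $\ell_1,\ell_2,\dots$ and superdiagonal $1$.
   Context: Linear functionals on complex polynomials; $\langle(x-c)^{-1}\mathbf{v},p\rangle=\langle\mathbf{v},(p(x)-p(c))/(x-c)\rangle$, $\langle\boldsymbol\delta_c,p\rangle=p(c)$, $\langle(x-c)\mathbf{w},p\rangle=\langle\mathbf{w},(x-c)p\rangle$. Quasi-definite: all leading principal Hankel minors nonzero; SMOP = sequence of monic orthogonal polynomials with $xP_n=P_{n+1}+b_nP_n+a_nP_{n-1}$, $P_{-1}=0,P_0=1$, $a_n\neq0$; the hypothesis $D_n\ne0$ guarantees $\widehat{\mathbf{v}}$ is quasi-definite with $\widehat P_n=P_n+\ell_nP_{n-1}$ and $\widehat P_n(c)\ne0$. Associated polynomials of the first kind: monic, $xP^{(1)}_n=P^{(1)}_{n+1}+b_{n+1}P^{(1)}_n+a_{n+1}P^{(1)}_{n-1}$, $P^{(1)}_{-1}=0,P^{(1)}_0=1$. Monic Jacobi matrix: tridiagonal, diagonal $(b_0,b_1,\dots)$, superdiagonal $1$'s, subdiagonal $(a_1,a_2,\dots)$. *)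

theory Defs
  imports "HOL-Computational_Algebra.Polynomial" "HOL-Analysis.Infinite_Sum" "Jordan_Normal_Form.Determinant"
begin

definition lin_func :: "(complex poly \<Rightarrow> complex) \<Rightarrow> bool" where
  "lin_func u \<longleftrightarrow> (\<forall>p q. u (p + q) = u p + u q) \<and> (\<forall>k p. u (smult k p) = k * u p)"

definition moment :: "(complex poly \<Rightarrow> complex) \<Rightarrow> nat \<Rightarrow> complex" where
  "moment u k = u (monom 1 k)"

definition quasi_definite :: "(complex poly \<Rightarrow> complex) \<Rightarrow> bool" where
  "quasi_definite u \<longleftrightarrow>
     (\<forall>n. det (mat (Suc n) (Suc n) (\<lambda>(i, j). moment u (i + j))) \<noteq> 0)"

definition is_SMOP :: "(complex poly \<Rightarrow> complex) \<Rightarrow> (nat \<Rightarrow> complex poly) \<Rightarrow> bool" where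
  "is_SMOP u P \<longleftrightarrow>
     (\<forall>n. degree (P n) = n \<and> lead_coeff (P n) = 1) \<and>
     (\<forall>n m. n \<noteq> m \<longrightarrow> u (P n * P m) = 0) \<and>
     (\<forall>n. u (P n * P n) \<noteq> 0)"

definition recur :: "(nat \<Rightarrow> complex) \<Rightarrow> (nat \<Rightarrow> complex) \<Rightarrow> (nat \<Rightarrow> complex poly) \<Rightarrow> bool" where
  "recur b a P \<longleftrightarrow> P 0 = 1 \<and>
     (\<forall>n. [:0, 1:] * P n = P (Suc n) + smult (b n) (P n)
                            + smult (a n) (if n = 0 then 0 else P (n - 1))) \<and>
     (\<forall>n\<ge>1. a n \<noteq> 0)"

fun assoc1 :: "(nat \<Rightarrow> complex) \<Rightarrow> (nat \<Rightarrow> complex) \<Rightarrow> nat \<Rightarrow> complex poly" where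
  "assoc1 b a 0 = 1"
| "assoc1 b a (Suc 0) = [:- b 1, 1:]"
| "assoc1 b a (Suc (Suc n)) =
     [:- b (n + 2), 1:] * assoc1 b a (Suc n) - smult (a (n + 2)) (assoc1 b a n)"

text \<open>P^(1)_{n-1}, with P^(1)_{-1} = 0.\<close>
definition assocm1 :: "(nat \<Rightarrow> complex) \<Rightarrow> (nat \<Rightarrow> complex) \<Rightarrow> nat \<Rightarrow> complex poly" where
  "assocm1 b a n = (if n = 0 then 0 else assoc1 b a (n - 1))"

definition divx :: "(complex poly \<Rightarrow> complex) \<Rightarrow> complex \<Rightarrow> complex poly \<Rightarrow> complex" where
  "divx u c p = u (synthetic_div p c)"   \<comment> \<open>(x-c)^{-1} u ; synthetic_div p c = (p - p(c))/(x - c)\<close>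

definition mulx :: "(complex poly \<Rightarrow> complex) \<Rightarrow> complex \<Rightarrow> complex poly \<Rightarrow> complex" where
  "mulx u c p = u ([:- c, 1:] * p)"

definition dirac :: "complex \<Rightarrow> complex poly \<Rightarrow> complex" where
  "dirac c p = poly p c"

definition jacobi :: "(nat \<Rightarrow> complex) \<Rightarrow> (nat \<Rightarrow> complex) \<Rightarrow> nat \<Rightarrow> nat \<Rightarrow> complex" where
  "jacobi b a i j = (if j = i then b i else if j = Suc i then 1 else if i = Suc j then a i else 0)"

definition lower_bidiag :: "(nat \<Rightarrow> complex) \<Rightarrow> nat \<Rightarrow> nat \<Rightarrow> complex" where
  "lower_bidiag d i j = (if j = i then 1 else if i = Suc j then d i else 0)"

definition upper_bidiag :: "(nat \<Rightarrow> complex) \<Rightarrow> nat \<Rightarrow> nat \<Rightarrow> complex" where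
  "upper_bidiag e i j = (if j = i then e i else if j = Suc i then 1 else 0)"

definition imat_mult :: "(nat \<Rightarrow> nat \<Rightarrow> complex) \<Rightarrow> (nat \<Rightarrow> nat \<Rightarrow> complex) \<Rightarrow> nat \<Rightarrow> nat \<Rightarrow> complex" where
  "imat_mult A B i j = infsum (\<lambda>k. A i k * B k j) UNIV"

definition imat_shift :: "(nat \<Rightarrow> nat \<Rightarrow> complex) \<Rightarrow> complex \<Rightarrow> nat \<Rightarrow> nat \<Rightarrow> complex" where
  "imat_shift A c i j = A i j - (if i = j then c else 0)"

end

theory Submission
  imports Defs
begin

text \<open>The Geronimus functional \<open>w = (x - c)\<^sup>-\<^sup>1 v + vh0 \<delta>\<^sub>c\<close> satisfies \<open>w ((x - c) p) = v p\<close>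
  and \<open>w (P n) = D n\<close>. Hence \<open>Ph n = P n + \<ell> n P (n - 1)\<close>, the three-term recurrence of \<open>D\<close>
  gives \<open>J - cI = UL\<close>, and the Darboux step \<open>(x - c) P n = Ph (n + 1) + \<beta> n Ph n\<close> gives
  \<open>Jh - cI = LU\<close>. The co-recursive family \<open>S\<close> only changes \<open>b 0\<close> into
  \<open>b 0 - v 1 / vh0 = c + \<ell> 1\<close>, so \<open>J\<^sub>\<alpha> - cI\<close> is the same factorization with \<open>\<beta> 0\<close>
  replaced by \<open>0\<close>. Running the Darboux step on \<open>S\<close> produces kernels
  \<open>S (n + 1) + \<ell> (n + 1) S n\<close> that satisfy the recurrence of \<open>Jh\<^sup>(\<^sup>1\<^sup>)\<close> and start with
  \<open>x - c\<close>, so they are \<open>(x - c)\<close> times the associated polynomials of \<open>Ph\<close>; and such Christoffel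
  kernels are orthogonal with respect to \<open>(x - c) v\<^sub>\<alpha>\<close>.\<close>

section \<open>Linear functionals\<close>

lemma lin_func_add: "lin_func u \<Longrightarrow> u (p + q) = u p + u q"
  by (simp add: lin_func_def)

lemma lin_func_smult: "lin_func u \<Longrightarrow> u (smult k p) = k * u p"
  by (simp add: lin_func_def)

lemma lin_func_zero: "lin_func u \<Longrightarrow> u 0 = 0"
  using lin_func_smult[of u 0 0] by simp

lemma lin_func_diff: "lin_func u \<Longrightarrow> u (p - q) = u p - u q"
  using lin_func_add[of u "p - q" q] by simp

lemma lin_func_sum:
  assumes "lin_func u" "finite A"
  shows "u (\<Sum>i\<in>A. f i) = (\<Sum>i\<in>A. u (f i))"
  using assms(2)
  by (induction A rule: finite_induct) (auto simp: lin_func_zero[OF assms(1)] lin_func_add[OF assms(1)])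

lemma lin_func_mulx: "lin_func u \<Longrightarrow> lin_func (mulx u c)"
  by (simp add: lin_func_def mulx_def distrib_left)

lemma synthetic_div_add:
  "synthetic_div (p + q) c = synthetic_div p c + synthetic_div (q :: 'a :: comm_ring_1 poly) c"
proof -
  have "(p + q) + smult c (synthetic_div p c + synthetic_div q c)
      = pCons (poly p c + poly q c) (synthetic_div p c + synthetic_div q c)"
    unfolding add_pCons[symmetric] synthetic_div_correct[symmetric]
    by (simp add: smult_add_right algebra_simps)
  from synthetic_div_unique[OF this] show ?thesis by simp
qed

lemma synthetic_div_smult:
  "synthetic_div (smult k p) c = smult k (synthetic_div (p :: 'a :: comm_ring_1 poly) c)"
proof -
  have "smult k p + smult c (smult k (synthetic_div p c))
      = pCons (k * poly p c) (smult k (synthetic_div p c))"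
    using arg_cong[OF synthetic_div_correct[of p c], of "smult k"]
    by (simp add: smult_add_right mult.commute)
  from synthetic_div_unique[OF this] show ?thesis by simp
qed

lemma synthetic_div_linear_mult: "synthetic_div ([:-c, 1:] * p) c = (p :: 'a :: comm_ring_1 poly)"
proof -
  have "[:-c, 1:] * p + smult c p = pCons 0 p" by simp
  from synthetic_div_unique[OF this] show ?thesis by simp
qed

lemma synthetic_div_one: "synthetic_div 1 c = (0 :: 'a :: comm_ring_1 poly)"
  using synthetic_div_eq_0_iff[of 1 c] by simp

lemma lin_func_geronimus:
  assumes "lin_func v"
  shows "lin_func (\<lambda>p. divx v c p + k * dirac c p)"
  unfolding lin_func_def divx_def dirac_def
  by (simp add: synthetic_div_add synthetic_div_smult lin_func_add[OF assms] lin_func_smult[OF assms]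
      algebra_simps)

lemma geronimus_linear_mult: "divx v c ([:-c, 1:] * p) + k * dirac c ([:-c, 1:] * p) = v p"
  unfolding divx_def dirac_def synthetic_div_linear_mult by simp

lemma geronimus_one: "lin_func v \<Longrightarrow> divx v c 1 + k * dirac c 1 = k"
  by (simp add: divx_def dirac_def synthetic_div_one lin_func_zero)

section \<open>Monic orthogonal polynomials\<close>

lemma degree_less_if_coeff_eq_0:
  "degree q \<le> d \<Longrightarrow> coeff q d = 0 \<Longrightarrow> q = 0 \<or> degree q < d"
  by (metis le_neq_implies_less leading_coeff_0_iff)

lemma monic_diff_degree_less:
  fixes p q :: "'a :: comm_ring_1 poly"
  assumes "degree p = n" "lead_coeff p = 1" "degree q = n" "lead_coeff q = 1"
  shows "p - q = 0 \<or> degree (p - q) < n"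
proof (rule degree_less_if_coeff_eq_0)
  show "degree (p - q) \<le> n"
    using degree_diff_le[of p n q] assms by simp
  show "coeff (p - q) n = 0"
    using assms by simp
qed

lemma monic_add_degree_less:
  fixes p q :: "'a :: comm_ring_1 poly"
  assumes "degree p = n" "lead_coeff p = 1" "degree q < n"
  shows "degree (p + q) = n" "lead_coeff (p + q) = 1"
  using assms degree_add_eq_left[of q p] lead_coeff_add_le[of q p] by (simp_all add: add.commute)

lemma is_SMOP_monic:
  "is_SMOP u P \<Longrightarrow> degree (P n) = n"
  "is_SMOP u P \<Longrightarrow> lead_coeff (P n) = 1"
  unfolding is_SMOP_def by blast+

lemma is_SMOP_zero:
  assumes "is_SMOP u P"
  shows "P 0 = 1"
proof -
  obtain k where "P 0 = [:k:]"
    using degree0_coeffs[OF is_SMOP_monic(1)[OF assms]] by blast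
  then show ?thesis
    using is_SMOP_monic(2)[OF assms, of 0] by (simp add: one_pCons)
qed

lemma is_SMOP_orth_lower:
  assumes u: "lin_func u" and P: "is_SMOP u P" and deg: "degree g < n"
  shows "u (g * P n) = 0"
  using deg
proof (induction "degree g" arbitrary: g rule: less_induct)
  case less
  define d where "d = degree g"
  define g' where "g' = g - smult (lead_coeff g) (P d)"
  have "g' = 0 \<or> degree g' < d"
  proof (rule degree_less_if_coeff_eq_0)
    show "degree g' \<le> d"
      unfolding g'_def d_def by (metis degree_diff_le degree_smult_le is_SMOP_monic(1)[OF P] order_refl)
    show "coeff g' d = 0"
      using is_SMOP_monic[OF P, of d] by (simp add: g'_def d_def)
  qed
  then have "u (g' * P n) = 0"
    using less d_def lin_func_zero[OF u] by auto
  moreover have "u (P d * P n) = 0"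
    using P less.prems d_def by (auto simp: is_SMOP_def)
  moreover have "g * P n = g' * P n + smult (lead_coeff g) (P d * P n)"
    by (simp add: g'_def algebra_simps)
  ultimately show ?case
    by (simp add: lin_func_add[OF u] lin_func_smult[OF u])
qed

lemma is_SMOP_orth_one:
  assumes "is_SMOP u P" "n \<ge> 1"
  shows "u (P n) = 0"
  using assms is_SMOP_zero[OF assms(1)] by (auto simp: is_SMOP_def dest: spec[of _ n] spec[of _ 0])

lemma is_SMOP_mult_degree_le:
  assumes u: "lin_func u" and P: "is_SMOP u P" and deg: "degree g \<le> n"
  shows "u (g * P n) = coeff g n * u (P n * P n)"
proof -
  define r where "r = g - smult (coeff g n) (P n)"
  have "r = 0 \<or> degree r < n"
  proof (rule degree_less_if_coeff_eq_0)
    show "degree r \<le> n"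
      unfolding r_def by (metis deg degree_diff_le degree_smult_le is_SMOP_monic(1)[OF P])
    show "coeff r n = 0"
      using is_SMOP_monic[OF P, of n] by (simp add: r_def)
  qed
  then have "u (r * P n) = 0"
    using is_SMOP_orth_lower[OF u P] lin_func_zero[OF u] by auto
  moreover have "g * P n = r * P n + smult (coeff g n) (P n * P n)"
    by (simp add: r_def algebra_simps)
  ultimately show ?thesis
    by (simp add: lin_func_add[OF u] lin_func_smult[OF u])
qed

lemma is_SMOP_unique:
  assumes u: "lin_func u" and P: "is_SMOP u P"
    and Q: "degree Q = n" "lead_coeff Q = 1"
    and orth: "\<And>g. degree g < n \<Longrightarrow> u (Q * g) = 0"
  shows "Q = P n"
proof (rule ccontr)
  assume "Q \<noteq> P n"
  then have f: "Q - P n \<noteq> 0" "degree (Q - P n) < n"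
    using monic_diff_degree_less[OF Q is_SMOP_monic[OF P]] by auto
  define d where "d = degree (Q - P n)"
  have "u ((Q - P n) * P d) = lead_coeff (Q - P n) * u (P d * P d)"
    unfolding d_def by (rule is_SMOP_mult_degree_le[OF u P order_refl])
  moreover have "u ((Q - P n) * P d) = u (Q * P d) - u (P n * P d)"
    by (simp add: left_diff_distrib lin_func_diff[OF u])
  moreover have "u (Q * P d) = 0"
    using orth[of "P d"] f(2) d_def is_SMOP_monic(1)[OF P] by simp
  moreover have "u (P n * P d) = 0"
    using P f(2) d_def by (simp add: is_SMOP_def)
  moreover have "u (P d * P d) \<noteq> 0"
    using P by (simp add: is_SMOP_def)
  moreover have "lead_coeff (Q - P n) \<noteq> 0"
    using f(1) by (rule leading_coeff_neq_0)
  ultimately show False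
    by (metis diff_self mult_eq_0_iff)
qed

lemma lin_func_mult_monom:
  assumes u: "lin_func u" and deg: "degree p \<le> n"
  shows "u (p * monom 1 j) = (\<Sum>k = 0..<Suc n. coeff p k * moment u (k + j))"
proof -
  have "p * monom 1 j = (\<Sum>k\<le>n. smult (coeff p k) (monom 1 (k + j)))"
    by (subst poly_as_sum_of_monoms'[OF deg, symmetric])
      (simp add: sum_distrib_right mult_monom smult_monom)
  then have "u (p * monom 1 j) = (\<Sum>k\<le>n. coeff p k * moment u (k + j))"
    by (simp add: lin_func_sum[OF u] lin_func_smult[OF u] moment_def)
  moreover have "{0..<Suc n} = {..n}" by auto
  ultimately show ?thesis by simp
qed

text \<open>The Hankel matrix, multiplied on the left by the (unitriangular) coefficient matrix of the
  SMOP, becomes upper triangular with diagonal entries \<open>u (P i * P i) \<noteq> 0\<close>.\<close>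

lemma is_SMOP_quasi_definite:
  assumes u: "lin_func u" and P: "is_SMOP u P"
  shows "quasi_definite u"
  unfolding quasi_definite_def
proof
  fix n
  define N where "N = Suc n"
  define H where "H = mat N N (\<lambda>(i, j). moment u (i + j))"
  define C where "C = mat N N (\<lambda>(i, j). coeff (P i) j)"
  have CH: "(C * H) $$ (i, j) = u (P i * monom 1 j)" if "i < N" "j < N" for i j
    using that lin_func_mult_monom[OF u, of "P i" "n"]
    by (simp add: C_def H_def N_def scalar_prod_def is_SMOP_monic[OF P])
  have carrier: "C * H \<in> carrier_mat N N" "C \<in> carrier_mat N N" "H \<in> carrier_mat N N"
    by (auto simp: C_def H_def)
  have "upper_triangular (C * H)"
    unfolding upper_triangular_def
  proof (intro allI impI)
    fix i j assume "i < dim_row (C * H)" "j < i"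
    then show "(C * H) $$ (i, j) = 0"
      using CH carrier is_SMOP_orth_lower[OF u P, of "monom 1 j" i]
      by (simp add: degree_monom_eq mult.commute)
  qed
  then have "det (C * H) = prod_list (diag_mat (C * H))"
    using carrier(1) by (rule det_upper_triangular)
  also have "\<dots> = (\<Prod>i = 0..<N. (C * H) $$ (i, i))"
    using carrier by (simp add: prod_list_diag_prod)
  also have "\<dots> = (\<Prod>i = 0..<N. u (P i * monom 1 i))"
    using CH by (intro prod.cong) auto
  also have "\<dots> = (\<Prod>i = 0..<N. u (P i * P i))"
    using is_SMOP_mult_degree_le[OF u P, of "monom 1 _"]
    by (intro prod.cong) (simp_all add: mult.commute degree_monom_le)
  finally have "det C * det H \<noteq> 0"
    using det_mult[OF carrier(2,3)] P by (simp add: is_SMOP_def)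
  then show "det (mat (Suc n) (Suc n) (\<lambda>(i, j). moment u (i + j))) \<noteq> 0"
    by (simp add: H_def N_def)
qed

section \<open>Three-term recurrences\<close>

lemma linear_mult_eq: "[:-c, 1:] * p = [:0, 1:] * p - smult c (p :: 'a :: comm_ring_1 poly)"
  by (simp add: algebra_simps)

lemma recur_zero: "recur b a P \<Longrightarrow> P 0 = 1"
  by (simp add: recur_def)

lemma recur_step:
  "recur b a P \<Longrightarrow>
    [:0, 1:] * P n = P (Suc n) + smult (b n) (P n) + smult (a n) (if n = 0 then 0 else P (n - 1))"
  unfolding recur_def by blast

lemma recur_linear_mult:
  assumes "recur b a P"
  shows "[:-c, 1:] * P n
    = P (Suc n) + smult (b n - c) (P n) + smult (a n) (if n = 0 then 0 else P (n - 1))"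
  using recur_step[OF assms, of n] unfolding linear_mult_eq by (simp add: algebra_simps smult_diff_left)

lemma recur_one:
  assumes "recur b a P"
  shows "P (Suc 0) = [:- b 0, 1:]"
proof -
  have "P (Suc 0) = [:0, 1:] * P 0 - smult (b 0) (P 0)"
    using recur_step[OF assms, of 0] by (simp add: eq_diff_eq)
  then show ?thesis
    using recur_zero[OF assms] by (simp add: one_pCons)
qed

lemma recur_coeffs_unique:
  assumes P: "recur b a P" "\<And>m. degree (P m) = m" "\<And>m. lead_coeff (P m) = 1" and n: "n \<ge> 1"
    and eq: "[:-c, 1:] * P n = P (Suc n) + smult \<beta> (P n) + smult \<alpha> (P (n - 1))"
  shows "b n = c + \<beta> \<and> a n = \<alpha>"
proof -
  have sum: "smult (b n - c - \<beta>) (P n) + smult (a n - \<alpha>) (P (n - 1)) = 0"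
    using recur_linear_mult[OF P(1), of c n] eq n by (simp add: algebra_simps smult_add_left smult_diff_left)
  have "coeff (P (n - 1)) n = 0"
    using P(2)[of "n - 1"] n by (simp add: coeff_eq_0)
  then have "b n - c - \<beta> = 0"
    using arg_cong[OF sum, of "\<lambda>p. coeff p n"] P(2,3)[of n] by simp
  moreover have "P (n - 1) \<noteq> 0"
    using P(3)[of "n - 1"] by auto
  ultimately show ?thesis
    using sum by (simp add: algebra_simps)
qed

lemma assocm1_linear_mult:
  assumes "n \<ge> 1"
  shows "[:-c, 1:] * assocm1 b a n
    = assocm1 b a (Suc n) + smult (b n - c) (assocm1 b a n) + smult (a n) (assocm1 b a (n - 1))"
proof -
  obtain m where m: "n = Suc m"
    using assms by (cases n) auto
  show ?thesis
    by (cases m) (simp_all add: m assocm1_def numeral_2_eq_2 algebra_simps smult_diff_left)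
qed

lemma assoc1_eq_mult:
  assumes "T (Suc 0) = [:- b 1, 1:] * T 0"
    and "\<And>n. T (n + 2) = [:- b (n + 2), 1:] * T (Suc n) - smult (a (n + 2)) (T n)"
  shows "T n = T 0 * assoc1 b a n"
proof -
  have "T n = T 0 * assoc1 b a n \<and> T (Suc n) = T 0 * assoc1 b a (Suc n)"
  proof (induction n)
    case 0
    then show ?case
      using assms(1) by simp
  next
    case (Suc n)
    then show ?case
      using assms(2)[of n] by (simp add: algebra_simps numeral_2_eq_2)
  qed
  then show ?thesis ..
qed

lemma co_recursive_coeffs:
  assumes P: "recur b a P"
    and S: "recur bs as S" "\<And>m. degree (S m) = m" "\<And>m. lead_coeff (S m) = 1"
    and S_def: "\<And>n. S n = P n + smult k (assocm1 b a n)"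
  shows "bs 0 = b 0 - k" and "n \<ge> 1 \<Longrightarrow> bs n = b n \<and> as n = a n"
proof -
  have "[:- bs 0, 1:] = [:- b 0, 1:] + [:k:]"
    using recur_one[OF S(1)] recur_one[OF P] S_def[of 1] by (simp add: assocm1_def)
  then have "- bs 0 = - (b 0 - k)"
    by simp
  then show "bs 0 = b 0 - k"
    by (simp only: neg_equal_iff_equal)
  show "bs n = b n \<and> as n = a n" if n: "n \<ge> 1"
  proof -
    have P_rec: "[:0, 1:] * P n = P (Suc n) + smult (b n) (P n) + smult (a n) (P (n - 1))"
      using recur_step[OF P, of n] n by simp
    have Q_rec: "[:0, 1:] * assocm1 b a n
        = assocm1 b a (Suc n) + smult (b n) (assocm1 b a n) + smult (a n) (assocm1 b a (n - 1))"
      using assocm1_linear_mult[OF n, of 0 b a] by simp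
    have "[:0, 1:] * S n = S (Suc n) + smult (b n) (S n) + smult (a n) (S (n - 1))"
      unfolding S_def distrib_left mult_smult_right P_rec Q_rec
      by (simp add: algebra_simps smult_add_right)
    then have "[:- 0, 1:] * S n = S (Suc n) + smult (b n) (S n) + smult (a n) (S (n - 1))"
      by simp
    from recur_coeffs_unique[OF S n this] show ?thesis
      by simp
  qed
qed

text \<open>Both sides satisfy the three-term recurrence of \<open>P\<close> at \<open>c\<close>, because \<open>v (P n) = 0\<close>
  for \<open>n \<ge> 1\<close>.\<close>

lemma divx_SMOP:
  assumes v: "lin_func v" and P: "is_SMOP v P" "recur b a P"
  shows "divx v c (P n) = v 1 * poly (assocm1 b a n) c"
proof -
  have step: "divx v c (P (Suc n)) = (c - b n) * divx v c (P n) - a n * divx v c (P (n - 1))"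
    if "n \<ge> 1" for n
  proof -
    have "P (Suc n) = [:-c, 1:] * P n + smult (c - b n) (P n) + smult (- a n) (P (n - 1))"
      using recur_linear_mult[OF P(2), of c n] that by (simp add: algebra_simps smult_diff_left)
    then have "divx v c (P (Suc n)) = v (synthetic_div ([:-c, 1:] * P n) c)
        + (c - b n) * divx v c (P n) + (- a n) * divx v c (P (n - 1))"
      by (simp only: divx_def synthetic_div_add synthetic_div_smult lin_func_add[OF v] lin_func_smult[OF v])
    moreover have "v (P n) = 0"
      using is_SMOP_orth_one[OF P(1) that] .
    ultimately show ?thesis
      unfolding synthetic_div_linear_mult by simp
  qed
  have step': "poly (assocm1 b a (Suc n)) c
      = (c - b n) * poly (assocm1 b a n) c - a n * poly (assocm1 b a (n - 1)) c"
    if "n \<ge> 1" for n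
    using arg_cong[OF assocm1_linear_mult[OF that, of c b a], of "\<lambda>p. poly p c"]
    by (simp add: algebra_simps)
  have "divx v c (P n) = v 1 * poly (assocm1 b a n) c
      \<and> divx v c (P (Suc n)) = v 1 * poly (assocm1 b a (Suc n)) c"
  proof (induction n)
    case 0
    have "P (Suc 0) = [:-c, 1:] * 1 + smult (c - b 0) 1"
      using recur_one[OF P(2)] by simp
    then have "synthetic_div (P (Suc 0)) c = 1"
      by (simp only: synthetic_div_add synthetic_div_smult synthetic_div_linear_mult synthetic_div_one)
        simp
    then show ?case
      using recur_zero[OF P(2)] lin_func_zero[OF v] by (simp add: divx_def assocm1_def synthetic_div_one)
  next
    case (Suc n)
    then show ?case
      using step[of "Suc n"] step'[of "Suc n"] by (simp add: right_diff_distrib)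
  qed
  then show ?thesis ..
qed

section \<open>Bidiagonal factorizations of Jacobi matrices\<close>

lemma imat_mult_finite:
  assumes "finite F" "\<And>k. k \<notin> F \<Longrightarrow> A i k * B k j = 0"
  shows "imat_mult A B i j = (\<Sum>k\<in>F. A i k * B k j)"
  unfolding imat_mult_def using assms by (subst infsum_cong_neutral[of F]) auto

lemma imat_mult_lower_upper:
  "imat_mult (lower_bidiag d) (upper_bidiag e) i j =
    (if j = i then e i + (if i = 0 then 0 else d i) else if j = Suc i then 1
     else if i = Suc j then d i * e j else 0)"
proof (cases i)
  case 0
  then have "imat_mult (lower_bidiag d) (upper_bidiag e) i j
      = (\<Sum>k\<in>{0}. lower_bidiag d i k * upper_bidiag e k j)"
    by (intro imat_mult_finite) (auto simp: lower_bidiag_def)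
  then show ?thesis
    by (auto simp: lower_bidiag_def upper_bidiag_def 0)
next
  case (Suc m)
  then have "imat_mult (lower_bidiag d) (upper_bidiag e) i j
      = (\<Sum>k\<in>{m, Suc m}. lower_bidiag d i k * upper_bidiag e k j)"
    by (intro imat_mult_finite) (auto simp: lower_bidiag_def)
  then show ?thesis
    by (auto simp: lower_bidiag_def upper_bidiag_def Suc)
qed

lemma imat_mult_upper_lower:
  "imat_mult (upper_bidiag e) (lower_bidiag d) i j =
    (if j = i then e i + d (Suc i) else if j = Suc i then 1
     else if i = Suc j then e i * d i else 0)"
proof -
  have "imat_mult (upper_bidiag e) (lower_bidiag d) i j
      = (\<Sum>k\<in>{i, Suc i}. upper_bidiag e i k * lower_bidiag d k j)"
    by (intro imat_mult_finite) (auto simp: upper_bidiag_def)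
  then show ?thesis
    by (auto simp: lower_bidiag_def upper_bidiag_def)
qed

lemma jacobi_shift_eq_lower_upper:
  "imat_shift (jacobi b a) c = imat_mult (lower_bidiag d) (upper_bidiag e)
    \<longleftrightarrow> b 0 = c + e 0 \<and> (\<forall>n\<ge>1. b n = c + e n + d n \<and> a n = d n * e (n - 1))"
proof
  assume eq: "imat_shift (jacobi b a) c = imat_mult (lower_bidiag d) (upper_bidiag e)"
  have "b 0 = c + e 0"
    using fun_cong[OF fun_cong[OF eq, of 0], of 0]
    by (simp add: imat_shift_def jacobi_def imat_mult_lower_upper algebra_simps)
  moreover have "b n = c + e n + d n \<and> a n = d n * e (n - 1)" if n: "n \<ge> 1" for n
  proof -
    obtain m where m: "n = Suc m"
      using n by (cases n) auto
    show ?thesis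
      using fun_cong[OF fun_cong[OF eq, of n], of n] fun_cong[OF fun_cong[OF eq, of n], of m]
      by (simp add: m imat_shift_def jacobi_def imat_mult_lower_upper algebra_simps)
  qed
  ultimately show "b 0 = c + e 0 \<and> (\<forall>n\<ge>1. b n = c + e n + d n \<and> a n = d n * e (n - 1))"
    by blast
next
  assume "b 0 = c + e 0 \<and> (\<forall>n\<ge>1. b n = c + e n + d n \<and> a n = d n * e (n - 1))"
  then show "imat_shift (jacobi b a) c = imat_mult (lower_bidiag d) (upper_bidiag e)"
    by (fastforce simp: fun_eq_iff imat_shift_def jacobi_def imat_mult_lower_upper)
qed

lemma jacobi_shift_eq_upper_lower:
  "imat_shift (jacobi b a) c = imat_mult (upper_bidiag e) (lower_bidiag d)
    \<longleftrightarrow> (\<forall>n. b n = c + e n + d (Suc n) \<and> a (Suc n) = e (Suc n) * d (Suc n))"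
proof
  assume eq: "imat_shift (jacobi b a) c = imat_mult (upper_bidiag e) (lower_bidiag d)"
  have "b n = c + e n + d (Suc n) \<and> a (Suc n) = e (Suc n) * d (Suc n)" for n
    using fun_cong[OF fun_cong[OF eq, of n], of n] fun_cong[OF fun_cong[OF eq, of "Suc n"], of n]
    by (simp add: imat_shift_def jacobi_def imat_mult_upper_lower algebra_simps)
  then show "\<forall>n. b n = c + e n + d (Suc n) \<and> a (Suc n) = e (Suc n) * d (Suc n)" ..
next
  assume "\<forall>n. b n = c + e n + d (Suc n) \<and> a (Suc n) = e (Suc n) * d (Suc n)"
  then show "imat_shift (jacobi b a) c = imat_mult (upper_bidiag e) (lower_bidiag d)"
    by (fastforce simp: fun_eq_iff imat_shift_def jacobi_def imat_mult_upper_lower)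
qed

lemma jacobi_shift_lower_upper_tail:
  assumes "imat_shift (jacobi b a) c = imat_mult (lower_bidiag d) (upper_bidiag e)"
  shows "imat_shift (jacobi (\<lambda>n. b (Suc n)) (\<lambda>n. a (Suc n))) c
    = imat_mult (upper_bidiag (\<lambda>n. d (Suc n))) (lower_bidiag e)"
  using assms unfolding jacobi_shift_eq_lower_upper jacobi_shift_eq_upper_lower
  by (auto simp: algebra_simps)

lemma darboux_upper_lower:
  assumes P: "recur b a P"
    and b: "\<And>n. b n = c + g n + e (Suc n)" and a: "\<And>n. n \<ge> 1 \<Longrightarrow> a n = g n * e n"
    and K0: "K 0 = 1" and K: "\<And>n. n \<ge> 1 \<Longrightarrow> K n = P n + smult (e n) (P (n - 1))"
  shows "[:-c, 1:] * P n = K (Suc n) + smult (g n) (K n)"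
proof (cases "n = 0")
  case True
  then show ?thesis
    using recur_linear_mult[OF P, of c 0] recur_zero[OF P] K0 K[of 1] b[of 0]
    by (simp add: algebra_simps)
next
  case False
  then show ?thesis
    using recur_linear_mult[OF P, of c n] K[of n] K[of "Suc n"] b[of n] a[of n]
    by (simp add: algebra_simps smult_add_left smult_add_right)
qed

lemma darboux_lower_upper:
  fixes P K :: "nat \<Rightarrow> 'a :: comm_ring_1 poly"
  assumes XP: "\<And>n. [:-c, 1:] * P n = K (Suc n) + smult (g n) (K n)"
    and K: "\<And>n. n \<ge> 1 \<Longrightarrow> K n = P n + smult (e n) (P (n - 1))" and n: "n \<ge> 1"
  shows "[:-c, 1:] * K n
    = K (Suc n) + smult (g n + e n) (K n) + smult (e n * g (n - 1)) (K (n - 1))"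
proof -
  have "[:-c, 1:] * K n = [:-c, 1:] * P n + smult (e n) ([:-c, 1:] * P (n - 1))"
    using K[OF n] by (simp add: algebra_simps)
  also have "\<dots> = K (Suc n) + smult (g n + e n) (K n) + smult (e n * g (n - 1)) (K (n - 1))"
    using XP[of n] XP[of "n - 1"] n by (simp add: algebra_simps smult_add_left smult_add_right)
  finally show ?thesis .
qed

lemma darboux_values:
  fixes P K :: "nat \<Rightarrow> 'a :: field poly"
  assumes XP: "\<And>n. [:-c, 1:] * P n = K (Suc n) + smult (g n) (K n)"
    and K0: "K 0 = 1" and g: "\<And>n. g n \<noteq> 0"
  shows "poly (K n) c \<noteq> 0" and "- poly (K (Suc n)) c / poly (K n) c = g n"
proof -
  have step: "poly (K (Suc n)) c = - g n * poly (K n) c" for n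
  proof -
    have "poly (K (Suc n)) c + g n * poly (K n) c = 0"
      using arg_cong[OF XP[of n], of "\<lambda>p. poly p c"] by simp
    then show ?thesis
      by (simp add: eq_neg_iff_add_eq_0)
  qed
  show nz: "poly (K n) c \<noteq> 0" for n
    by (induction n) (simp_all add: K0 step g)
  show "- poly (K (Suc n)) c / poly (K n) c = g n"
    using step nz by simp
qed

lemma darboux_lower_upper_jacobi:
  assumes XP: "\<And>n. [:-c, 1:] * P n = K (Suc n) + smult (g n) (K n)"
    and K: "\<And>n. n \<ge> 1 \<Longrightarrow> K n = P n + smult (e n) (P (n - 1))" and P0: "P 0 = 1"
    and Krec: "recur bk ak K" and Kmonic: "\<And>m. degree (K m) = m" "\<And>m. lead_coeff (K m) = 1"
  shows "imat_shift (jacobi bk ak) c = imat_mult (lower_bidiag e) (upper_bidiag g)"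
proof -
  have "K (Suc 0) + smult (g 0) 1 = K (Suc 0) + smult (bk 0 - c) 1"
    using XP[of 0] recur_linear_mult[OF Krec, of c 0] recur_zero[OF Krec] P0 by simp
  then have "bk 0 = c + g 0"
    by (simp add: algebra_simps)
  moreover have "bk n = c + g n + e n \<and> ak n = e n * g (n - 1)" if n: "n \<ge> 1" for n
    using recur_coeffs_unique[OF Krec Kmonic n darboux_lower_upper[OF XP K n]]
    by (simp add: algebra_simps)
  ultimately show ?thesis
    unfolding jacobi_shift_eq_lower_upper by blast
qed

section \<open>Geronimus and Christoffel transforms\<close>

lemma geronimus_kernel:
  assumes v: "lin_func v" and P: "is_SMOP v P"
    and w: "lin_func w" and wX: "\<And>p. w ([:-c, 1:] * p) = v p" and Q: "is_SMOP w Q"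
    and n: "n \<ge> 1" and nz: "w (P (n - 1)) \<noteq> 0"
  shows "Q n = P n + smult (- w (P n) / w (P (n - 1))) (P (n - 1))"
proof -
  define k where "k = - w (P n) / w (P (n - 1))"
  define q where "q = P n + smult k (P (n - 1))"
  have "degree (smult k (P (n - 1))) < n"
    using degree_smult_le[of k "P (n - 1)"] is_SMOP_monic(1)[OF P, of "n - 1"] n by simp
  then have q_monic: "degree q = n" "lead_coeff q = 1"
    unfolding q_def using monic_add_degree_less is_SMOP_monic[OF P] by blast+
  have wq: "w q = 0"
    unfolding q_def lin_func_add[OF w] lin_func_smult[OF w] using nz by (simp add: k_def)
  have "q = Q n"
  proof (rule is_SMOP_unique[OF w Q q_monic])
    fix g :: "complex poly"
    assume deg: "degree g < n"
    (* g = (x - c) h + g(c) with degree h < n - 1, and w ((x - c) f) = v f *)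
    define h where "h = synthetic_div g c"
    have "q * g = q * ([:-c, 1:] * h + [:poly g c:])"
      using synthetic_div_correct'[of c g] by (simp add: h_def)
    then have "q * g = [:-c, 1:] * (q * h) + smult (poly g c) q"
      by (simp add: algebra_simps)
    then have "w (q * g) = v (q * h) + poly g c * w q"
      by (simp only: wX lin_func_add[OF w] lin_func_smult[OF w])
    also have "\<dots> = v (h * P n) + k * v (h * P (n - 1))"
      using wq by (simp add: q_def algebra_simps lin_func_add[OF v] lin_func_smult[OF v])
    also have "\<dots> = 0"
    proof (cases "degree g = 0")
      case True
      then have "h = 0"
        by (simp add: h_def synthetic_div_eq_0_iff)
      then show ?thesis
        using lin_func_zero[OF v] by simp
    next
      case False
      then have "degree h < n - 1"
        using deg by (simp add: h_def degree_synthetic_div)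
      then show ?thesis
        using is_SMOP_orth_lower[OF v P] by simp
    qed
    finally show "w (q * g) = 0" .
  qed
  then show ?thesis
    by (simp add: q_def k_def)
qed

lemma geronimus_upper_lower_coeffs:
  assumes v: "lin_func v" and P: "is_SMOP v P" "recur b a P"
    and w: "lin_func w" and wX: "\<And>p. w ([:-c, 1:] * p) = v p"
    and nz: "\<And>n. w (P n) \<noteq> 0" and ell: "\<And>n. n \<ge> 1 \<Longrightarrow> ell n = - w (P n) / w (P (n - 1))"
  shows "b 0 - c - ell 1 = v 1 / w 1"
    and "n \<ge> 1 \<Longrightarrow> a n = (b n - c - ell (Suc n)) * ell n"
proof -
  have P0: "P 0 = 1"
    using is_SMOP_zero[OF P(1)] .
  have step: "w (P (Suc n))
      = v (P n) + (c - b n) * w (P n) - a n * w (if n = 0 then 0 else P (n - 1))" for n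
  proof -
    have "P (Suc n) = [:-c, 1:] * P n + smult (c - b n) (P n)
        + smult (- a n) (if n = 0 then 0 else P (n - 1))"
      using recur_linear_mult[OF P(2), of c n] by (simp add: algebra_simps smult_diff_left)
    then show ?thesis
      by (simp only: wX lin_func_add[OF w] lin_func_smult[OF w]) simp
  qed
  show "b 0 - c - ell 1 = v 1 / w 1"
    using step[of 0] ell[of 1] nz[of 0] P0 lin_func_zero[OF w] by (simp add: field_simps)
  show "a n = (b n - c - ell (Suc n)) * ell n" if n: "n \<ge> 1"
  proof -
    have rec: "w (P (Suc n)) = (c - b n) * w (P n) - a n * w (P (n - 1))"
      using step[of n] n is_SMOP_orth_one[OF P(1) n] by simp
    show ?thesis
      unfolding ell[OF n] ell[of "Suc n", simplified] rec
      using nz[of n] nz[of "n - 1"] by (simp add: field_simps)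
  qed
qed

lemma geronimus_factorization:
  assumes v: "lin_func v" and P: "is_SMOP v P" "recur b a P"
    and w: "lin_func w" and wX: "\<And>p. w ([:-c, 1:] * p) = v p"
    and Q: "is_SMOP w Q" "recur bq aq Q"
    and nz: "\<And>n. w (P n) \<noteq> 0" and ell: "\<And>n. n \<ge> 1 \<Longrightarrow> ell n = - w (P n) / w (P (n - 1))"
    and beta: "\<And>n. beta n = - poly (Q (Suc n)) c / poly (Q n) c"
  shows "beta 0 = v 1 / w 1"
    and "imat_shift (jacobi b a) c = imat_mult (upper_bidiag beta) (lower_bidiag ell)"
    and "imat_shift (jacobi bq aq) c = imat_mult (lower_bidiag ell) (upper_bidiag beta)"
proof -
  define g where "g n = b n - c - ell (Suc n)" for n
  note coeffs = geronimus_upper_lower_coeffs[OF v P w wX nz ell]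
  have g_nz: "g n \<noteq> 0" for n
  proof (cases "n = 0")
    case True
    have "v 1 \<noteq> 0" "w 1 \<noteq> 0"
      using P(1) nz[of 0] is_SMOP_zero[OF P(1)] by (auto simp: is_SMOP_def dest: spec[of _ 0])
    then show ?thesis
      using coeffs(1) True by (simp add: g_def)
  next
    case False
    then show ?thesis
      using coeffs(2)[of n] P(2) by (auto simp: g_def recur_def)
  qed
  have kernel: "Q n = P n + smult (ell n) (P (n - 1))" if "n \<ge> 1" for n
    using geronimus_kernel[OF v P(1) w wX Q(1) that nz] ell[OF that] by simp
  have b_eq: "\<And>n. b n = c + g n + ell (Suc n)" and a_eq: "\<And>n. n \<ge> 1 \<Longrightarrow> a n = g n * ell n"
    using coeffs(2) by (simp_all add: g_def)
  have XP: "[:-c, 1:] * P n = Q (Suc n) + smult (g n) (Q n)" for n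
    by (rule darboux_upper_lower[OF P(2) b_eq a_eq recur_zero[OF Q(2)] kernel])
  have beta_g: "beta = g"
    using darboux_values(2)[OF XP recur_zero[OF Q(2)] g_nz] beta by auto
  show "beta 0 = v 1 / w 1"
    using coeffs(1) by (simp add: beta_g g_def)
  show "imat_shift (jacobi b a) c = imat_mult (upper_bidiag beta) (lower_bidiag ell)"
    unfolding jacobi_shift_eq_upper_lower beta_g using coeffs(2) by (simp add: g_def)
  show "imat_shift (jacobi bq aq) c = imat_mult (lower_bidiag ell) (upper_bidiag beta)"
    unfolding beta_g
    by (rule darboux_lower_upper_jacobi[OF XP kernel is_SMOP_zero[OF P(1)] Q(2) is_SMOP_monic[OF Q(1)]])
qed

lemma mulx_is_SMOP:
  assumes u: "lin_func u" and S: "is_SMOP u S"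
    and R: "\<And>n. [:-c, 1:] * R n = S (Suc n) + smult (e n) (S n)" and e: "\<And>n. e n \<noteq> 0"
  shows "is_SMOP (mulx u c) R"
proof -
  have monic: "degree (R n) = n \<and> lead_coeff (R n) = 1" for n
  proof -
    have "degree (smult (e n) (S n)) < Suc n"
      using degree_smult_le[of "e n" "S n"] is_SMOP_monic(1)[OF S, of n] by simp
    then have XR: "degree ([:-c, 1:] * R n) = Suc n" "lead_coeff ([:-c, 1:] * R n) = 1"
      unfolding R using monic_add_degree_less is_SMOP_monic[OF S] by blast+
    then have "R n \<noteq> 0"
      by auto
    then show ?thesis
      using XR degree_mult_eq[of "[:-c, 1:]" "R n"] lead_coeff_mult[of "[:-c, 1:]" "R n"]
      by (simp del: mult_pCons_left)
  qed
  have mulx_R: "mulx u c (R m * R n) = u (R m * S (Suc n)) + e n * u (R m * S n)" for m n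
    unfolding mulx_def mult.left_commute[of "[:-c, 1:]"] R
    by (simp add: distrib_left lin_func_add[OF u] lin_func_smult[OF u])
  have lower: "mulx u c (R m * R n) = 0" if "m < n" for m n
    using mulx_R[of m n] is_SMOP_orth_lower[OF u S] monic[of m] that by simp
  have "mulx u c (R n * R m) = 0" if "n \<noteq> m" for n m
    using lower[of n m] lower[of m n] that by (cases "m < n") (simp_all add: mult.commute)
  moreover have "mulx u c (R n * R n) = e n * u (S n * S n)" for n
  proof -
    have "coeff (R n) n = 1"
      using monic[of n] by metis
    then show ?thesis
      using mulx_R[of n n] is_SMOP_orth_lower[OF u S, of "R n" "Suc n"]
        is_SMOP_mult_degree_le[OF u S, of "R n" n] monic[of n]
      by simp
  qed
  moreover have "e n * u (S n * S n) \<noteq> 0" for n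
    using e[of n] S by (simp add: is_SMOP_def)
  ultimately show ?thesis
    unfolding is_SMOP_def using monic by metis
qed

lemma christoffel_kernel:
  assumes S: "recur bs as S"
    and LU: "imat_shift (jacobi bs as) c = imat_mult (lower_bidiag d) (upper_bidiag e)"
    and UL: "imat_shift (jacobi (\<lambda>n. b (Suc n)) (\<lambda>n. a (Suc n))) c
      = imat_mult (upper_bidiag e) (lower_bidiag d)"
  shows "[:-c, 1:] * assoc1 b a n = S (Suc n) + smult (e n) (S n)"
proof -
  have bs0: "bs 0 = c + e 0" and bs: "\<And>n. n \<ge> 1 \<Longrightarrow> bs n = c + e n + d n \<and> as n = d n * e (n - 1)"
    using LU unfolding jacobi_shift_eq_lower_upper by auto
  have b: "\<And>n. b (Suc n) = c + e n + d (Suc n) \<and> a (Suc (Suc n)) = e (Suc n) * d (Suc n)"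
    using UL unfolding jacobi_shift_eq_upper_lower by auto
  (* the LU factorization of J_S - cI, read as a UL factorization whose first upper entry is 0 *)
  define g where "g n = (if n = 0 then 0 else d n)" for n
  define K where "K n = (if n = 0 then 1 else S n + smult (e (n - 1)) (S (n - 1)))" for n
  have XS: "[:-c, 1:] * S n = K (Suc n) + smult (g n) (K n)" for n
    by (rule darboux_upper_lower[OF S, of c g "\<lambda>n. e (n - 1)"]) (use bs0 bs in \<open>auto simp: g_def K_def\<close>)
  have XK: "[:-c, 1:] * K n = K (Suc n) + smult (g n + e (n - 1)) (K n)
      + smult (e (n - 1) * g (n - 1)) (K (n - 1))" if "n \<ge> 1" for n
    by (rule darboux_lower_upper[of c S K g "\<lambda>n. e (n - 1)", OF XS _ that]) (simp add: K_def)
  have K1: "K (Suc 0) = [:-c, 1:]"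
    using XS[of 0] recur_zero[OF S] by (simp add: g_def K_def)
  have "K (Suc n) = K (Suc 0) * assoc1 b a n"
  proof (rule assoc1_eq_mult)
    show "K (Suc (Suc 0)) = [:- b 1, 1:] * K (Suc 0)"
      using XK[of 1] b[of 0] unfolding linear_mult_eq by (simp add: g_def algebra_simps smult_add_left)
    show "K (Suc (n + 2)) = [:- b (n + 2), 1:] * K (Suc (Suc n)) - smult (a (n + 2)) (K (Suc n))" for n
      using XK[of "n + 2"] b[of n] b[of "Suc n"] unfolding linear_mult_eq
      by (simp add: g_def algebra_simps smult_add_left numeral_2_eq_2)
  qed
  then have "[:-c, 1:] * assoc1 b a n = K (Suc n)"
    unfolding K1 by (simp only: mult.commute)
  then show ?thesis
    by (simp add: K_def)
qed

theorem mainTheorem14: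
  fixes v valpha :: "complex poly \<Rightarrow> complex"
    and P Ph S :: "nat \<Rightarrow> complex poly"
    and b a bh ah balpha aalpha :: "nat \<Rightarrow> complex"
    and c vh0 :: complex
    and D ell beta :: "nat \<Rightarrow> complex"
  assumes v_lin: "lin_func v" and v_qd: "quasi_definite v"
    and P_SMOP: "is_SMOP v P" and P_rec: "recur b a P"
    and D_def: "\<And>n. D n = v 1 * poly (assocm1 b a n) c + vh0 * poly (P n) c"
    and D_nz: "\<And>n. D n \<noteq> 0"
    and Ph_SMOP: "is_SMOP (\<lambda>p. divx v c p + vh0 * dirac c p) Ph"
    and Ph_rec: "recur bh ah Ph"
    and ell_def: "\<And>n. n \<ge> 1 \<Longrightarrow> ell n = - D n / D (n - 1)"
    and beta_def: "\<And>n. beta n = - poly (Ph (Suc n)) c / poly (Ph n) c"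
    and S_def: "\<And>n. S n = P n + smult (v 1 / vh0) (assocm1 b a n)"
    and valpha_lin: "lin_func valpha" and valpha_qd: "quasi_definite valpha"
    and S_SMOP: "is_SMOP valpha S" and S_rec: "recur balpha aalpha S"
  shows "quasi_definite (mulx valpha c) \<and> is_SMOP (mulx valpha c) (assoc1 bh ah)
         \<and> imat_shift (jacobi balpha aalpha) c
             = imat_mult (lower_bidiag (\<lambda>n. beta n)) (upper_bidiag (\<lambda>n. ell (Suc n)))
         \<and> imat_shift (jacobi (\<lambda>n. bh (Suc n)) (\<lambda>n. ah (Suc n))) c
             = imat_mult (upper_bidiag (\<lambda>n. ell (Suc n))) (lower_bidiag (\<lambda>n. beta n))"
proof -
  define w where "w = (\<lambda>p. divx v c p + vh0 * dirac c p)"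
  have w: "lin_func w" "\<And>p. w ([:-c, 1:] * p) = v p" "w 1 = vh0"
    unfolding w_def using lin_func_geronimus[OF v_lin] geronimus_linear_mult geronimus_one[OF v_lin]
    by blast+
  have wP: "w (P n) = D n" for n
    using divx_SMOP[OF v_lin P_SMOP P_rec] D_def by (simp add: w_def dirac_def)
  have ell_w: "ell n = - w (P n) / w (P (n - 1))" if "n \<ge> 1" for n
    using ell_def[OF that] by (simp add: wP)
  have ell_nz: "ell (Suc n) \<noteq> 0" for n
    using ell_def[of "Suc n"] D_nz by simp
  note factorization = geronimus_factorization[OF v_lin P_SMOP P_rec w(1,2) Ph_SMOP[folded w_def]
      Ph_rec _ ell_w beta_def, unfolded wP w(3), OF D_nz]
  note co_recursive = co_recursive_coeffs[OF P_rec S_rec is_SMOP_monic[OF S_SMOP] S_def]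
  have b_eq: "b n = c + beta n + ell (Suc n)" and a_eq: "a (Suc n) = beta (Suc n) * ell (Suc n)" for n
    using factorization(2) unfolding jacobi_shift_eq_upper_lower by blast+
  have J_alpha: "imat_shift (jacobi balpha aalpha) c
      = imat_mult (lower_bidiag (\<lambda>n. beta n)) (upper_bidiag (\<lambda>n. ell (Suc n)))"
    unfolding jacobi_shift_eq_lower_upper
    using co_recursive b_eq factorization(1) a_eq by (auto simp: algebra_simps dest!: Suc_le_D)
  have J1: "imat_shift (jacobi (\<lambda>n. bh (Suc n)) (\<lambda>n. ah (Suc n))) c
      = imat_mult (upper_bidiag (\<lambda>n. ell (Suc n))) (lower_bidiag (\<lambda>n. beta n))"
    using jacobi_shift_lower_upper_tail[OF factorization(3)] by simp
  have SMOP: "is_SMOP (mulx valpha c) (assoc1 bh ah)"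
    using mulx_is_SMOP[OF valpha_lin S_SMOP christoffel_kernel[OF S_rec J_alpha J1] ell_nz] .
  show ?thesis
    using is_SMOP_quasi_definite[OF lin_func_mulx[OF valpha_lin] SMOP] SMOP J_alpha J1 by blast
qed

end
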